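(* Let $n\equiv0\pmod 4$ and let $C$ be a Type III code of length $n$. Let $\mathrm{III}_n$ be the set of all Type III codes of length $n$. Then: \[ \text{(i)}\quad \frac1{|\mathrm{III}_n|}\sum_{D\in\mathrm{III}_n}|C\cap D|=4-\frac{4}{3^{n/2-1}+1}; \] \[ \text{(ii)}\quad \frac1{|\mathrm{III}_n|}\sum_{D\in\mathrm{III}_n}|C\cap D|^2=\frac{40\,(3^{n/2})^2}{(3^{n/2}+3)(3^{n/2}+9)}. \]
   Context: A Type III code of length $n$ ($n\equiv0\pmod4$) is a self-dual linear code $C\subseteq\mathbb F_3^n$, i.e. $C=C^\perp$ with respect to the inner product $u\cdot v=\sum_i u_iv_i$, in which every codeword has Hamming weight divisible by $3$. Such codes have dimension $n/2$. *)

theory Defs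
  imports "HOL-Analysis.Analysis" "HOL-Library.Numeral_Type"
begin

text \<open>Ternary vectors of length n: functions nat => 3 (the type 3 is Z/3Z = F_3)
  vanishing outside {0..<n}.\<close>

definition tvecs :: "nat \<Rightarrow> (nat \<Rightarrow> 3) set" where
  "tvecs n = {v. \<forall>i\<ge>n. v i = 0}"

definition tinner :: "nat \<Rightarrow> (nat \<Rightarrow> 3) \<Rightarrow> (nat \<Rightarrow> 3) \<Rightarrow> 3" where
  "tinner n u v = (\<Sum>i<n. u i * v i)"

definition hweight :: "nat \<Rightarrow> (nat \<Rightarrow> 3) \<Rightarrow> nat" where
  "hweight n v = card {i. i < n \<and> v i \<noteq> 0}"

definition linear_code :: "nat \<Rightarrow> (nat \<Rightarrow> 3) set \<Rightarrow> bool" where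
  "linear_code n C \<longleftrightarrow> C \<subseteq> tvecs n \<and> (\<lambda>_. 0) \<in> C
     \<and> (\<forall>u\<in>C. \<forall>v\<in>C. (\<lambda>i. u i + v i) \<in> C)
     \<and> (\<forall>a::3. \<forall>u\<in>C. (\<lambda>i. a * u i) \<in> C)"

definition dual_code :: "nat \<Rightarrow> (nat \<Rightarrow> 3) set \<Rightarrow> (nat \<Rightarrow> 3) set" where
  "dual_code n C = {u \<in> tvecs n. \<forall>v\<in>C. tinner n u v = 0}"

definition self_dual :: "nat \<Rightarrow> (nat \<Rightarrow> 3) set \<Rightarrow> bool" where
  "self_dual n C \<longleftrightarrow> linear_code n C \<and> C = dual_code n C"

definition type_III :: "nat \<Rightarrow> (nat \<Rightarrow> 3) set \<Rightarrow> bool" where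
  "type_III n C \<longleftrightarrow> self_dual n C \<and> (\<forall>v\<in>C. 3 dvd hweight n v)"

definition III :: "nat \<Rightarrow> (nat \<Rightarrow> 3) set set" where
  "III n = {C. type_III n C}"

end

theory Submission
  imports Defs
begin

text \<open>Since \<open>v\<cdot>v \<equiv> wt(v) (mod 3)\<close>, the Type III codes are exactly the self-dual codes.
  Reflections in anisotropic vectors preserve the inner product and hence permute the self-dual
  codes; a Witt-type argument shows that they act transitively on the nonzero isotropic vectors
  \<open>x\<close> and, with \<open>x\<close> fixed, on the isotropic vectors orthogonal to \<open>x\<close> that are not multiples of
  \<open>x\<close>. So the number \<open>f\<close> of self-dual codes containing such an \<open>x\<close>, and the number \<open>g\<close> containing
  \<open>x\<close> and such a \<open>y\<close>, are constants. Double counting incidences between codes and isotropic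
  vectors determines \<open>f\<close> and \<open>g\<close> from the number of isotropic vectors, which for \<open>n \<equiv> 0 (mod 4)\<close>
  follows from the recursion \<open>N(n + 2) + 3 N(n) = 4\<cdot>3\<^sup>n\<close>. Finally, the sum of \<open>|C \<inter> D|\<close>
  over all \<open>D\<close> is the sum over \<open>x \<in> C\<close> of the number of codes through \<open>x\<close>, and the sum of
  \<open>|C \<inter> D|\<^sup>2\<close> is the sum over pairs \<open>x, y \<in> C\<close> of the number of codes through both.\<close>

lemma F3_cases: "(a::3) = 0 \<or> a = 1 \<or> a = 2"
proof (cases a)
  case (of_int z)
  then have "z = 0 \<or> z = 1 \<or> z = 2" by auto
  then show ?thesis using of_int by auto
qed

lemma UNIV_F3: "(UNIV::3 set) = {0, 1, 2}"
  using F3_cases by auto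

lemma sum_UNIV_F3: "(\<Sum>a\<in>UNIV. f a) = f (0::3) + f 1 + f 2"
proof -
  have "(0::3) \<notin> {1, 2}" "(1::3) \<notin> {2}" by auto
  then show ?thesis unfolding UNIV_F3 by (simp add: add.assoc)
qed

lemma F3_mult_self: "(a::3) \<noteq> 0 \<Longrightarrow> a * a = 1"
  using F3_cases[of a] by auto

lemma F3_mult_nonzero:
  assumes "(a::3) \<noteq> 0" "b \<noteq> 0"
  shows "a * b \<noteq> 0"
proof
  assume "a * b = 0"
  then have "a * a * b = 0" by (simp add: mult.assoc)
  then show False using assms by (simp add: F3_mult_self)
qed

lemma F3_triple: "(a::3) + a + a = 0"
proof -
  have "a + a + a = 3 * a" by (simp add: algebra_simps)
  also have "(3::3) = 0" by simp
  finally show ?thesis by simp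
qed

lemma F3_avoid_zeros:
  assumes "(\<alpha>::3) \<noteq> 0" "\<delta> \<noteq> 0"
  obtains s where "\<alpha> + s * \<beta> \<noteq> 0" "\<gamma> + s * \<delta> \<noteq> 0"
proof -
  have "\<exists>s. \<alpha> + s * \<beta> \<noteq> 0 \<and> \<gamma> + s * \<delta> \<noteq> 0"
  proof (rule ccontr)
    assume "\<not> ?thesis"
    then have h: "\<alpha> + s * \<beta> = 0 \<or> \<gamma> + s * \<delta> = 0" for s by auto
    have \<gamma>: "\<gamma> = 0" using h[of 0] assms by simp
    have "\<alpha> + \<beta> = 0" using h[of 1] \<gamma> assms by simp
    moreover have "2 * \<delta> \<noteq> 0" using assms(2) F3_cases[of \<delta>] by auto
    then have "\<alpha> + 2 * \<beta> = 0" using h[of 2] \<gamma> by simp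
    ultimately show False
      using assms(1) by (metis add_diff_cancel_left' diff_self mult_2 add.assoc add_0_right)
  qed
  then show ?thesis using that by blast
qed

lemma tinner_commute: "tinner n u v = tinner n v u"
  unfolding tinner_def by (simp add: mult.commute)

lemma tinner_Suc: "tinner (Suc n) u v = tinner n u v + u n * v n"
  unfolding tinner_def by simp

lemma tinner_cong: "(\<And>i. i < n \<Longrightarrow> u i = u' i) \<Longrightarrow> tinner n u v = tinner n u' v"
  unfolding tinner_def by (rule sum.cong) auto

lemma tinner_add_left: "tinner n (\<lambda>i. u i + w i) v = tinner n u v + tinner n w v"
  unfolding tinner_def by (simp add: distrib_right sum.distrib)

lemma tinner_add_right: "tinner n v (\<lambda>i. u i + w i) = tinner n v u + tinner n v w"
  unfolding tinner_def by (simp add: distrib_left sum.distrib)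

lemma tinner_diff_left: "tinner n (\<lambda>i. u i - w i) v = tinner n u v - tinner n w v"
  unfolding tinner_def by (simp add: left_diff_distrib sum_subtractf)

lemma tinner_diff_right: "tinner n v (\<lambda>i. u i - w i) = tinner n v u - tinner n v w"
  unfolding tinner_def by (simp add: right_diff_distrib sum_subtractf)

lemma tinner_scale_left: "tinner n (\<lambda>i. a * u i) v = a * tinner n u v"
  unfolding tinner_def by (simp add: sum_distrib_left mult.assoc)

lemma tinner_scale_right: "tinner n v (\<lambda>i. a * u i) = a * tinner n v u"
  unfolding tinner_def by (simp add: sum_distrib_left algebra_simps)

lemma tinner_zero_left [simp]: "tinner n (\<lambda>i. 0) v = 0"
  and tinner_zero_right [simp]: "tinner n v (\<lambda>i. 0) = 0"
  unfolding tinner_def by simp_all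

lemmas tinner_linear =
  tinner_add_left tinner_add_right tinner_diff_left tinner_diff_right
  tinner_scale_left tinner_scale_right

lemma tinner_unit_left:
  assumes "j < n"
  shows "tinner n (\<lambda>i. if i = j then c else 0) v = c * v j"
proof -
  have "tinner n (\<lambda>i. if i = j then c else 0) v = (\<Sum>i<n. if i = j then c * v j else 0)"
    unfolding tinner_def by (rule sum.cong) auto
  then show ?thesis using assms by simp
qed

lemma tinner_add_scale_add_scale:
  "tinner n (\<lambda>i. u i + a * r i) (\<lambda>i. v i + b * r i)
     = tinner n u v + b * tinner n u r + a * tinner n r v + a * b * tinner n r r"
  by (simp add: tinner_linear algebra_simps)

lemma tvecs_add [intro]: "u \<in> tvecs n \<Longrightarrow> v \<in> tvecs n \<Longrightarrow> (\<lambda>i. u i + v i) \<in> tvecs n"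
  and tvecs_diff [intro]: "u \<in> tvecs n \<Longrightarrow> v \<in> tvecs n \<Longrightarrow> (\<lambda>i. u i - v i) \<in> tvecs n"
  and tvecs_scale [intro]: "u \<in> tvecs n \<Longrightarrow> (\<lambda>i. a * u i) \<in> tvecs n"
  and tvecs_zero [intro, simp]: "(\<lambda>i. 0) \<in> tvecs n"
  unfolding tvecs_def by auto

lemma tvecs_0: "tvecs 0 = {\<lambda>i. 0}"
  unfolding tvecs_def by auto

lemma tvecs_Suc_iff: "v \<in> tvecs (Suc n) \<longleftrightarrow> v(n := 0) \<in> tvecs n"
proof -
  have "(\<forall>i\<ge>Suc n. v i = 0) \<longleftrightarrow> (\<forall>i\<ge>n. (v(n := 0)) i = 0)"
  proof (intro iffI allI impI)
    fix i assume "\<forall>i\<ge>Suc n. v i = 0" "n \<le> i"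
    then show "(v(n := 0)) i = 0" by (cases "i = n") auto
  next
    fix i assume "\<forall>i\<ge>n. (v(n := 0)) i = 0" "Suc n \<le> i"
    then show "v i = 0" by (metis Suc_leD fun_upd_other not_less_eq_eq order_refl)
  qed
  then show ?thesis unfolding tvecs_def by simp
qed

lemma inj_on_tvecs_extend: "inj_on (\<lambda>(w, s). w(n := s)) (tvecs n \<times> UNIV)"
proof (rule inj_onI, clarsimp)
  fix w s w' s' assume w: "w \<in> tvecs n" "w' \<in> tvecs n" and e: "w(n := s) = w'(n := s')"
  have "s = s'" using fun_cong[OF e, of n] by simp
  moreover have "w i = w' i" for i
    using fun_cong[OF e, of i] w unfolding tvecs_def by (cases "i = n") auto
  ultimately show "w = w' \<and> s = s'" by auto
qed

lemma tvecs_Suc_eq_extend: "tvecs (Suc n) = (\<lambda>(w, s). w(n := s)) ` (tvecs n \<times> UNIV)"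
proof
  show "tvecs (Suc n) \<subseteq> (\<lambda>(w, s). w(n := s)) ` (tvecs n \<times> UNIV)"
  proof
    fix v assume "v \<in> tvecs (Suc n)"
    then show "v \<in> (\<lambda>(w, s). w(n := s)) ` (tvecs n \<times> UNIV)"
      by (intro rev_image_eqI[of "(v(n := 0), v n)"]) (auto simp: tvecs_Suc_iff)
  qed
qed (auto simp: tvecs_def)

lemma card_extend:
  assumes "P \<subseteq> tvecs n"
  shows "card ((\<lambda>(w, s). w(n := s)) ` (P \<times> (UNIV::3 set))) = 3 * card P"
proof -
  have "inj_on (\<lambda>(w, s). w(n := s)) (P \<times> (UNIV::3 set))"
    using inj_on_subset[OF inj_on_tvecs_extend] assms by blast
  then show ?thesis by (simp add: card_image card_cartesian_product)
qed

lemma finite_tvecs: "finite (tvecs n)"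
  by (induction n) (simp_all add: tvecs_0 tvecs_Suc_eq_extend)

lemma card_tvecs: "card (tvecs n) = 3 ^ n"
  by (induction n) (simp_all add: tvecs_0 tvecs_Suc_eq_extend card_extend)

lemma tvecs_nonzero_coord:
  assumes "x \<in> tvecs n" "x \<noteq> (\<lambda>i. 0)"
  obtains i where "i < n" "x i \<noteq> 0"
proof -
  from assms(2) obtain i where "x i \<noteq> 0" by auto
  moreover have "i < n" using assms(1) calculation unfolding tvecs_def by (auto simp: not_less[symmetric])
  ultimately show ?thesis using that by blast
qed

lemma linear_code_subset: "linear_code n C \<Longrightarrow> C \<subseteq> tvecs n"
  and linear_code_zero: "linear_code n C \<Longrightarrow> (\<lambda>i. 0) \<in> C"
  and linear_code_add: "linear_code n C \<Longrightarrow> u \<in> C \<Longrightarrow> v \<in> C \<Longrightarrow> (\<lambda>i. u i + v i) \<in> C"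
  and linear_code_scale: "linear_code n C \<Longrightarrow> u \<in> C \<Longrightarrow> (\<lambda>i. a * u i) \<in> C"
  unfolding linear_code_def by auto

lemma linear_code_diff:
  assumes "linear_code n C" "u \<in> C" "v \<in> C"
  shows "(\<lambda>i. u i - v i) \<in> C"
proof -
  have "(\<lambda>i. u i + (-1) * v i) \<in> C"
    using assms by (intro linear_code_add linear_code_scale)
  then show ?thesis by simp
qed

lemma finite_linear_code: "linear_code n C \<Longrightarrow> finite C"
  using finite_subset[OF linear_code_subset finite_tvecs] .

lemma dual_code_subset: "dual_code n S \<subseteq> tvecs n"
  unfolding dual_code_def by auto

definition shortened :: "nat \<Rightarrow> (nat \<Rightarrow> 3) set \<Rightarrow> (nat \<Rightarrow> 3) set" where
  "shortened n S = {v \<in> S. v n = 0}"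

lemma linear_code_shortened:
  assumes "linear_code (Suc n) S"
  shows "linear_code n (shortened n S)"
proof -
  have "shortened n S \<subseteq> tvecs n"
    using linear_code_subset[OF assms] unfolding shortened_def
    by (auto simp: tvecs_Suc_iff fun_upd_idem)
  then show ?thesis
    using assms unfolding linear_code_def shortened_def by auto
qed

lemma tinner_upd_last: "tinner (Suc n) (u(n := s)) v = tinner n u v + s * v n"
proof -
  have "tinner n (u(n := s)) v = tinner n u v" by (rule tinner_cong) auto
  then show ?thesis by (simp add: tinner_Suc)
qed

lemma dual_code_Suc_restrict:
  assumes "u \<in> dual_code (Suc n) S"
  shows "u(n := 0) \<in> dual_code n (shortened n S)"
  using assms tinner_upd_last[of n u 0] tvecs_Suc_iff
  unfolding dual_code_def shortened_def by (auto simp: tinner_Suc)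

lemma card_dual_code_Suc_free:
  assumes "\<forall>v\<in>S. v n = 0"
  shows "card (dual_code (Suc n) S) = 3 * card (dual_code n (shortened n S))"
proof -
  have "dual_code (Suc n) S = (\<lambda>(w, s). w(n := s)) ` (dual_code n (shortened n S) \<times> UNIV)"
  proof
    show "dual_code (Suc n) S \<subseteq> (\<lambda>(w, s). w(n := s)) ` (dual_code n (shortened n S) \<times> UNIV)"
      using dual_code_Suc_restrict by (force intro: rev_image_eqI[of "(_(n := 0), _ n)"])
    have "w(n := s) \<in> dual_code (Suc n) S" if "w \<in> dual_code n (shortened n S)" for w s
      using that assms dual_code_subset[of n "shortened n S"]
      unfolding dual_code_def shortened_def tvecs_def by (auto simp: tinner_upd_last)
    then show "(\<lambda>(w, s). w(n := s)) ` (dual_code n (shortened n S) \<times> UNIV) \<subseteq> dual_code (Suc n) S"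
      by auto
  qed
  then show ?thesis using card_extend[OF dual_code_subset] by simp
qed

lemma card_shortened:
  assumes S: "linear_code (Suc n) S" and z: "z \<in> S" "z n = 1"
  shows "card S = 3 * card (shortened n S)"
proof -
  let ?f = "\<lambda>(v, c) i. v i + c * z i"
  have S_eq: "S = ?f ` (shortened n S \<times> UNIV)"
  proof
    show "S \<subseteq> ?f ` (shortened n S \<times> UNIV)"
    proof
      fix u assume "u \<in> S"
      then have "(\<lambda>i. u i - u n * z i) \<in> shortened n S"
        using linear_code_diff[OF S _ linear_code_scale[OF S z(1)]] z(2)
        unfolding shortened_def by auto
      then show "u \<in> ?f ` (shortened n S \<times> UNIV)"
        by (intro rev_image_eqI[of "(\<lambda>i. u i - u n * z i, u n)"]) auto
    qed
    show "?f ` (shortened n S \<times> UNIV) \<subseteq> S"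
      using linear_code_add[OF S] linear_code_scale[OF S z(1)] unfolding shortened_def by auto
  qed
  have inj: "inj_on ?f (shortened n S \<times> UNIV)"
  proof (rule inj_onI, clarsimp)
    fix v c v' c'
    assume v: "v \<in> shortened n S" "v' \<in> shortened n S"
      and e: "(\<lambda>i. v i + c * z i) = (\<lambda>i. v' i + c' * z i)"
    have "c = c'" using fun_cong[OF e, of n] v z(2) unfolding shortened_def by simp
    then show "v = v' \<and> c = c'" using e by (auto simp: fun_eq_iff)
  qed
  have "card S = card (?f ` (shortened n S \<times> UNIV))" using S_eq by (rule arg_cong)
  also have "\<dots> = card (shortened n S \<times> (UNIV::3 set))" by (rule card_image[OF inj])
  finally show ?thesis by (simp add: card_cartesian_product)
qed

text \<open>A dual word is determined by its first \<open>n\<close> coordinates, the last one being forced by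
  orthogonality to \<open>z\<close>.\<close>

lemma card_dual_code_Suc:
  assumes S: "linear_code (Suc n) S" and z: "z \<in> S" "z n = 1"
  shows "card (dual_code (Suc n) S) = card (dual_code n (shortened n S))"
proof (rule bij_betw_same_card, rule bij_betw_byWitness[where f' = "\<lambda>w. w(n := - tinner n w z)"])
  show "\<forall>u\<in>dual_code (Suc n) S. (u(n := 0))(n := - tinner n (u(n := 0)) z) = u"
  proof
    fix u assume "u \<in> dual_code (Suc n) S"
    then have "tinner (Suc n) u z = 0" using z(1) unfolding dual_code_def by auto
    then have "u n = - tinner n (u(n := 0)) z"
      using tinner_upd_last[of n u 0] z(2) by (simp add: tinner_Suc eq_neg_iff_add_eq_0 add.commute)
    then show "(u(n := 0))(n := - tinner n (u(n := 0)) z) = u" by auto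
  qed
  show "\<forall>w\<in>dual_code n (shortened n S). (w(n := - tinner n w z))(n := 0) = w"
    using dual_code_subset unfolding tvecs_def by (auto simp: fun_eq_iff)
  show "(\<lambda>u. u(n := 0)) ` dual_code (Suc n) S \<subseteq> dual_code n (shortened n S)"
    using dual_code_Suc_restrict by blast
  show "(\<lambda>w. w(n := - tinner n w z)) ` dual_code n (shortened n S) \<subseteq> dual_code (Suc n) S"
  proof clarify
    fix w assume w: "w \<in> dual_code n (shortened n S)"
    have "tinner (Suc n) (w(n := - tinner n w z)) v = 0" if "v \<in> S" for v
    proof -
      have "(\<lambda>i. v i - v n * z i) \<in> shortened n S"
        using linear_code_diff[OF S that linear_code_scale[OF S z(1)]] z(2)
        unfolding shortened_def by auto
      then have "tinner n w (\<lambda>i. v i - v n * z i) = 0" using w unfolding dual_code_def by auto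
      then show ?thesis by (simp add: tinner_upd_last tinner_linear)
    qed
    moreover have "w(n := - tinner n w z) \<in> tvecs (Suc n)"
      using w dual_code_subset[of n "shortened n S"] unfolding tvecs_def by auto
    ultimately show "w(n := - tinner n w z) \<in> dual_code (Suc n) S"
      unfolding dual_code_def by auto
  qed
qed

lemma card_mult_card_dual_code: "linear_code n S \<Longrightarrow> card S * card (dual_code n S) = 3 ^ n"
proof (induction n arbitrary: S)
  case 0
  then have "S = {\<lambda>i. 0}" using linear_code_subset linear_code_zero tvecs_0 by blast
  moreover have "dual_code 0 S = {\<lambda>i. 0}" unfolding dual_code_def tvecs_0 by (auto simp: tinner_def)
  ultimately show ?case by simp
next
  case (Suc n)
  note IH = Suc.IH[OF linear_code_shortened[OF Suc.prems]]
  show ?case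
  proof (cases "\<forall>v\<in>S. v n = 0")
    case True
    then have "shortened n S = S" unfolding shortened_def by auto
    with True IH show ?thesis using card_dual_code_Suc_free[OF True] by simp
  next
    case False
    then obtain z0 where z0: "z0 \<in> S" "z0 n \<noteq> 0" by auto
    define z where "z = (\<lambda>i. z0 n * z0 i)"
    have "z \<in> S" "z n = 1"
      unfolding z_def using linear_code_scale[OF Suc.prems z0(1)] F3_mult_self[OF z0(2)] by auto
    with IH show ?thesis
      using card_shortened[OF Suc.prems] card_dual_code_Suc[OF Suc.prems] by simp
  qed
qed

lemma self_dual_linear_code: "self_dual n D \<Longrightarrow> linear_code n D"
  unfolding self_dual_def by auto

lemma self_dual_orthogonal: "self_dual n D \<Longrightarrow> x \<in> D \<Longrightarrow> y \<in> D \<Longrightarrow> tinner n x y = 0"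
  unfolding self_dual_def dual_code_def by blast

lemma tinner_self_eq_hweight: "tinner n v v = of_nat (hweight n v)"
proof -
  have "tinner n v v = (\<Sum>i\<in>{i. i < n \<and> v i \<noteq> 0}. 1)"
    unfolding tinner_def by (rule sum.mono_neutral_cong_right) (auto simp: F3_mult_self)
  then show ?thesis unfolding hweight_def by simp
qed

lemma type_III_iff_self_dual: "type_III n D \<longleftrightarrow> self_dual n D"
proof -
  have "3 dvd hweight n v \<longleftrightarrow> tinner n v v = 0" for v
    using of_nat_eq_0_iff_char_dvd[where 'a = 3] by (simp add: tinner_self_eq_hweight)
  then show ?thesis unfolding type_III_def using self_dual_orthogonal by blast
qed

lemma III_eq: "III n = {D. self_dual n D}"
  unfolding III_def by (auto simp: type_III_iff_self_dual)

lemma finite_III: "finite (III n)"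
proof (rule finite_subset)
  show "III n \<subseteq> Pow (tvecs n)"
    unfolding III_eq using self_dual_linear_code linear_code_subset by blast
qed (simp add: finite_tvecs)

lemma III_linear_code: "D \<in> III n \<Longrightarrow> linear_code n D"
  and III_orthogonal: "D \<in> III n \<Longrightarrow> x \<in> D \<Longrightarrow> y \<in> D \<Longrightarrow> tinner n x y = 0"
  unfolding III_eq using self_dual_linear_code self_dual_orthogonal by blast+

lemma card_self_dual:
  assumes D: "self_dual n D" and n: "n = 2 * m"
  shows "card D = 3 ^ m"
proof -
  have "card D * card D = 3 ^ m * 3 ^ m"
    using card_mult_card_dual_code[OF self_dual_linear_code[OF D]] D n
    unfolding self_dual_def by (simp add: power_add[symmetric] mult_2)
  then show ?thesis by (metis power2_eq_square power2_eq_iff_nonneg zero_le)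
qed

lemma card_III: "D \<in> III n \<Longrightarrow> n = 2 * m \<Longrightarrow> card D = 3 ^ m"
  unfolding III_eq by (simp add: card_self_dual)

definition multiples :: "(nat \<Rightarrow> 3) \<Rightarrow> (nat \<Rightarrow> 3) set" where
  "multiples x = range (\<lambda>c i. c * x i)"

lemma multiples_subset: "linear_code n D \<Longrightarrow> x \<in> D \<Longrightarrow> multiples x \<subseteq> D"
  unfolding multiples_def using linear_code_scale by blast

lemma card_multiples:
  assumes "x \<noteq> (\<lambda>i. 0)"
  shows "card (multiples x) = 3"
proof -
  obtain j where j: "x j \<noteq> 0" using assms by auto
  have "inj (\<lambda>c i. c * x i)"
  proof (rule injI)
    fix c c' :: 3 assume "(\<lambda>i. c * x i) = (\<lambda>i. c' * x i)"
    then have "c * x j * x j = c' * x j * x j" by (metis (no_types))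
    then show "c = c'" using F3_mult_self[OF j] by (simp add: mult.assoc)
  qed
  then show ?thesis unfolding multiples_def by (simp add: card_image)
qed

lemma scale_mem_linear_code_iff:
  assumes "linear_code n D" "c \<noteq> 0"
  shows "(\<lambda>i. c * x i) \<in> D \<longleftrightarrow> x \<in> D"
proof
  assume "(\<lambda>i. c * x i) \<in> D"
  then have "(\<lambda>i. c * (c * x i)) \<in> D" using linear_code_scale[OF assms(1)] by blast
  then show "x \<in> D" using F3_mult_self[OF assms(2)] by (simp add: mult.assoc[symmetric])
qed (use linear_code_scale[OF assms(1)] in blast)

section \<open>Reflections\<close>

text \<open>For anisotropic \<open>r\<close> we have \<open>r\<cdot>r = (r\<cdot>r)\<inverse>\<close> and \<open>-2 = 1\<close>, so this is the usual
  reflection \<open>v - 2 (v\<cdot>r) / (r\<cdot>r) r\<close> in the hyperplane orthogonal to \<open>r\<close>.\<close>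

definition reflect :: "nat \<Rightarrow> (nat \<Rightarrow> 3) \<Rightarrow> (nat \<Rightarrow> 3) \<Rightarrow> (nat \<Rightarrow> 3)" where
  "reflect n r v = (\<lambda>i. v i + (tinner n r r * tinner n v r) * r i)"

lemma reflect_tvecs: "r \<in> tvecs n \<Longrightarrow> v \<in> tvecs n \<Longrightarrow> reflect n r v \<in> tvecs n"
  unfolding reflect_def by (intro tvecs_add tvecs_scale)

lemma reflect_add: "reflect n r (\<lambda>i. u i + v i) = (\<lambda>i. reflect n r u i + reflect n r v i)"
  and reflect_scale: "reflect n r (\<lambda>i. a * u i) = (\<lambda>i. a * reflect n r u i)"
  and reflect_zero: "reflect n r (\<lambda>i. 0) = (\<lambda>i. 0)"
  unfolding reflect_def by (simp_all add: tinner_linear algebra_simps)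

lemma reflect_orthogonal: "tinner n p r = 0 \<Longrightarrow> reflect n r p = p"
  unfolding reflect_def by simp

lemma tinner_reflect:
  assumes "tinner n r r \<noteq> 0"
  shows "tinner n (reflect n r u) (reflect n r v) = tinner n u v"
proof -
  define k where "k = tinner n r r"
  have kk: "k * (k * a) = a" for a
    using F3_mult_self assms unfolding k_def by (simp add: mult.assoc[symmetric])
  have "tinner n (reflect n r u) (reflect n r v)
      = tinner n u v + (k * tinner n v r) * tinner n u r + (k * tinner n u r) * tinner n v r
        + (k * tinner n u r) * (k * tinner n v r) * k"
    unfolding reflect_def tinner_add_scale_add_scale k_def by (simp only: tinner_commute[of n r v])
  also have "\<dots> = tinner n u v + (k * tinner n u r * tinner n v r + k * tinner n u r * tinner n v r
        + k * tinner n u r * tinner n v r)"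
    by (simp add: algebra_simps kk)
  finally show ?thesis by (simp only: F3_triple) simp
qed

lemma reflect_reflect:
  assumes "tinner n r r \<noteq> 0"
  shows "reflect n r (reflect n r v) = v"
proof
  fix i
  define k where "k = tinner n r r"
  define b where "b = tinner n v r"
  have kk: "k * (k * a) = a" for a
    using F3_mult_self assms unfolding k_def by (simp add: mult.assoc[symmetric])
  have "tinner n (reflect n r v) r = b + (k * b) * k"
    unfolding reflect_def b_def k_def by (simp only: tinner_add_left tinner_scale_left)
  also have "\<dots> = b + b" using kk by (simp add: algebra_simps)
  finally have "tinner n (reflect n r v) r = b + b" .
  then have "reflect n r (reflect n r v) i = v i + (k * b + k * b + k * b) * r i"
    unfolding reflect_def[of n r "reflect n r v"] unfolding reflect_def k_def b_def
    by (simp add: algebra_simps)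
  then show "reflect n r (reflect n r v) i = v i" by (simp only: F3_triple) simp
qed

text \<open>Isotropic vectors \<open>x\<close>, \<open>y\<close> with \<open>x\<cdot>y \<noteq> 0\<close> are exchanged by the reflection in
  \<open>x - y\<close>, which is anisotropic because \<open>(x - y)\<cdot>(x - y) = -2 (x\<cdot>y) = x\<cdot>y\<close>.\<close>

lemma reflect_diff_isotropic:
  assumes q: "tinner n x x = 0" "tinner n y y = 0" and b: "tinner n x y \<noteq> 0"
  shows "tinner n (\<lambda>i. x i - y i) (\<lambda>i. x i - y i) \<noteq> 0"
    and "reflect n (\<lambda>i. x i - y i) x = y"
proof -
  define k where "k = tinner n x y"
  have "tinner n (\<lambda>i. x i - y i) (\<lambda>i. x i - y i) = - (k + k)"
    using q unfolding k_def by (simp add: tinner_linear tinner_commute[of n y x])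
  also have "\<dots> = k" using F3_triple[of k] by (simp add: add_eq_0_iff2)
  finally have r: "tinner n (\<lambda>i. x i - y i) (\<lambda>i. x i - y i) = k" .
  then show "tinner n (\<lambda>i. x i - y i) (\<lambda>i. x i - y i) \<noteq> 0" using b unfolding k_def by simp
  have "tinner n x (\<lambda>i. x i - y i) = - k" using q unfolding k_def by (simp add: tinner_linear)
  then show "reflect n (\<lambda>i. x i - y i) x = y"
    using F3_mult_self[OF b] unfolding reflect_def r k_def by (simp add: fun_eq_iff)
qed

lemma linear_code_reflect:
  assumes r: "r \<in> tvecs n" and D: "linear_code n D"
  shows "linear_code n (reflect n r ` D)"
  unfolding linear_code_def
proof (intro conjI ballI allI)
  show "reflect n r ` D \<subseteq> tvecs n" using reflect_tvecs[OF r] linear_code_subset[OF D] by auto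
  show "(\<lambda>i. 0) \<in> reflect n r ` D" using linear_code_zero[OF D] reflect_zero by (metis image_eqI)
  fix u v assume "u \<in> reflect n r ` D" "v \<in> reflect n r ` D"
  then show "(\<lambda>i. u i + v i) \<in> reflect n r ` D"
    using linear_code_add[OF D] by (auto simp flip: reflect_add)
next
  fix a u assume "u \<in> reflect n r ` D"
  then show "(\<lambda>i. a * u i) \<in> reflect n r ` D"
    using linear_code_scale[OF D] by (auto simp flip: reflect_scale)
qed

lemma self_dual_reflect:
  assumes r: "r \<in> tvecs n" "tinner n r r \<noteq> 0" and D: "self_dual n D"
  shows "self_dual n (reflect n r ` D)"
proof -
  note lin = linear_code_reflect[OF r(1) self_dual_linear_code[OF D]]
  have "reflect n r ` D \<subseteq> dual_code n (reflect n r ` D)"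
    unfolding dual_code_def using linear_code_subset[OF lin] tinner_reflect[OF r(2)]
      self_dual_orthogonal[OF D] by auto
  moreover have "y \<in> reflect n r ` D" if y: "y \<in> dual_code n (reflect n r ` D)" for y
  proof -
    have "tinner n (reflect n r y) v = 0" if "v \<in> D" for v
      using tinner_reflect[OF r(2), of "reflect n r y" v] y that
      unfolding reflect_reflect[OF r(2)] dual_code_def by auto
    then have "reflect n r y \<in> dual_code n D"
      using reflect_tvecs[OF r(1)] y dual_code_subset unfolding dual_code_def by blast
    then have "reflect n r y \<in> D" using D unfolding self_dual_def by auto
    then show ?thesis using reflect_reflect[OF r(2)] by (metis image_eqI)
  qed
  ultimately show ?thesis using lin unfolding self_dual_def by blast
qed

section \<open>Self-dual codes through isotropic vectors\<close>

definition codes_through :: "nat \<Rightarrow> (nat \<Rightarrow> 3) \<Rightarrow> (nat \<Rightarrow> 3) \<Rightarrow> nat" where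
  "codes_through n x y = card {D \<in> III n. x \<in> D \<and> y \<in> D}"

lemma codes_through_reflect:
  assumes r: "r \<in> tvecs n" "tinner n r r \<noteq> 0"
  shows "codes_through n (reflect n r x) (reflect n r y) = codes_through n x y"
proof -
  let ?R = "\<lambda>D. reflect n r ` D"
  have RR: "?R (?R D) = D" for D using reflect_reflect[OF r(2)] by (simp add: image_image)
  have "{D \<in> III n. reflect n r x \<in> D \<and> reflect n r y \<in> D} = ?R ` {D \<in> III n. x \<in> D \<and> y \<in> D}"
  proof (intro equalityI subsetI)
    fix D assume D: "D \<in> {D \<in> III n. reflect n r x \<in> D \<and> reflect n r y \<in> D}"
    have "x \<in> ?R D" "y \<in> ?R D"
      using D rev_image_eqI[of "reflect n r x" D x "reflect n r"]
        rev_image_eqI[of "reflect n r y" D y "reflect n r"] by (simp_all add: reflect_reflect[OF r(2)])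
    moreover have "?R D \<in> III n" using D self_dual_reflect[OF r] unfolding III_eq by simp
    ultimately have "?R D \<in> {D \<in> III n. x \<in> D \<and> y \<in> D}" by simp
    then show "D \<in> ?R ` {D \<in> III n. x \<in> D \<and> y \<in> D}" using RR[of D] by (auto intro: image_eqI)
  qed (use self_dual_reflect[OF r] in \<open>auto simp: III_eq\<close>)
  moreover have "inj_on ?R {D \<in> III n. x \<in> D \<and> y \<in> D}" by (rule inj_on_inverseI[where g = ?R]) (rule RR)
  ultimately show ?thesis unfolding codes_through_def by (simp add: card_image)
qed

lemma codes_through_diag_eq_of_tinner:
  assumes "p \<in> tvecs n" "q \<in> tvecs n" "tinner n p p = 0" "tinner n q q = 0" "tinner n p q \<noteq> 0"
  shows "codes_through n p p = codes_through n q q"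
proof -
  have "(\<lambda>i. p i - q i) \<in> tvecs n" using assms(1,2) by blast
  from codes_through_reflect[OF this reflect_diff_isotropic(1)[OF assms(3-5)], of p p]
  show ?thesis unfolding reflect_diff_isotropic(2)[OF assms(3-5)] by simp
qed

lemma codes_through_eq_of_tinner:
  assumes "p \<in> tvecs n" "q \<in> tvecs n" "tinner n p p = 0" "tinner n q q = 0" "tinner n p q \<noteq> 0"
    and "tinner n x p = 0" "tinner n x q = 0"
  shows "codes_through n x p = codes_through n x q"
proof -
  have x: "reflect n (\<lambda>i. p i - q i) x = x"
    by (rule reflect_orthogonal) (simp add: tinner_linear assms(6,7))
  have "(\<lambda>i. p i - q i) \<in> tvecs n" using assms(1,2) by blast
  from codes_through_reflect[OF this reflect_diff_isotropic(1)[OF assms(3-5)], of x p]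
  show ?thesis unfolding x reflect_diff_isotropic(2)[OF assms(3-5)] by simp
qed

lemma exists_tinner_nonzero:
  assumes "x \<in> tvecs n" "x \<noteq> (\<lambda>i. 0)"
  obtains a where "a \<in> tvecs n" "tinner n a x \<noteq> 0"
proof -
  obtain i where i: "i < n" "x i \<noteq> 0" using tvecs_nonzero_coord[OF assms] .
  have "(\<lambda>k. if k = i then 1 else 0) \<in> tvecs n" using i(1) unfolding tvecs_def by auto
  moreover have "tinner n (\<lambda>k. if k = i then 1 else 0) x \<noteq> 0" using tinner_unit_left[OF i(1)] i(2) by simp
  ultimately show ?thesis using that by blast
qed

lemma exists_tinner_nonzero_perp:
  assumes x: "x \<in> tvecs n" "x \<noteq> (\<lambda>i. 0)" and y: "y \<in> tvecs n" "y \<notin> multiples x"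
  obtains a where "a \<in> tvecs n" "tinner n a x = 0" "tinner n a y \<noteq> 0"
proof -
  obtain i where i: "i < n" "x i \<noteq> 0" using tvecs_nonzero_coord[OF x] .
  define y' where "y' = (\<lambda>k. y k - (y i * x i) * x k)"
  have y'_tvecs: "y' \<in> tvecs n" unfolding y'_def using x(1) y(1) by (intro tvecs_diff tvecs_scale)
  have y'_i: "y' i = 0" unfolding y'_def using F3_mult_self[OF i(2)] by (simp add: mult.assoc)
  have "y' \<noteq> (\<lambda>i. 0)"
  proof
    assume "y' = (\<lambda>i. 0)"
    then have "y k = (y i * x i) * x k" for k
      using fun_cong[of y' "\<lambda>i. 0" k] unfolding y'_def by simp
    then have "y \<in> multiples x" unfolding multiples_def by (intro range_eqI[of _ _ "y i * x i"] ext)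
    then show False using y(2) by simp
  qed
  then obtain j where j: "j < n" "y' j \<noteq> 0" using tvecs_nonzero_coord[OF y'_tvecs] by blast
  define a where "a = (\<lambda>k. (if k = j then x i else 0) + (if k = i then - x j else 0))"
  have "a \<in> tvecs n" unfolding a_def tvecs_def using i j by auto
  moreover have ax: "tinner n a x = 0"
    unfolding a_def tinner_add_left tinner_unit_left[OF i(1)] tinner_unit_left[OF j(1)]
    by (simp add: mult.commute)
  moreover have "tinner n a y = x i * y' j"
  proof -
    have "tinner n a y = tinner n a y'" unfolding y'_def tinner_diff_right tinner_scale_right ax by simp
    then show ?thesis
      unfolding a_def tinner_add_left tinner_unit_left[OF i(1)] tinner_unit_left[OF j(1)] y'_i by simp
  qed
  then have "tinner n a y \<noteq> 0" using F3_mult_nonzero[OF i(2) j(2)] by simp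
  ultimately show ?thesis using that by blast
qed

text \<open>The vector \<open>z\<close> below is \<open>a + s b + t y\<close>, with \<open>s\<close> chosen so that
  \<open>(a + s b)\<cdot>y\<close> and \<open>(a + s b)\<cdot>y'\<close> are nonzero and \<open>t\<close> so that \<open>z\<close> is isotropic.\<close>

lemma exists_isotropic_link:
  assumes ab: "a \<in> tvecs n" "b \<in> tvecs n" and y: "y \<in> tvecs n" "tinner n y y = 0"
    and yy': "tinner n y y' = 0" and nz: "tinner n a y \<noteq> 0" "tinner n b y' \<noteq> 0"
  obtains z where "z \<in> tvecs n" "tinner n z z = 0" "tinner n y z \<noteq> 0" "tinner n z y' \<noteq> 0"
    "\<And>x. tinner n x a = 0 \<Longrightarrow> tinner n x b = 0 \<Longrightarrow> tinner n x y = 0 \<Longrightarrow> tinner n x z = 0"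
proof -
  obtain s where s: "tinner n a y + s * tinner n b y \<noteq> 0" "tinner n a y' + s * tinner n b y' \<noteq> 0"
    using F3_avoid_zeros[OF nz] .
  define w where "w = (\<lambda>i. a i + s * b i)"
  have wy: "tinner n w y \<noteq> 0" and wy': "tinner n w y' \<noteq> 0"
    using s unfolding w_def by (simp_all add: tinner_linear)
  define t where "t = tinner n w w * tinner n w y"
  define z where "z = (\<lambda>i. w i + t * y i)"
  have "w \<in> tvecs n" unfolding w_def using ab by (intro tvecs_add tvecs_scale)
  then have "z \<in> tvecs n" unfolding z_def using y(1) by (intro tvecs_add tvecs_scale)
  moreover have "tinner n z z = 0"
  proof -
    have "tinner n z z = tinner n w w + t * tinner n w y + t * tinner n w y"
      unfolding z_def tinner_add_scale_add_scale using y(2) by (simp add: tinner_commute[of n y w])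
    also have "\<dots> = tinner n w w + tinner n w w + tinner n w w"
      unfolding t_def using F3_mult_self[OF wy] by (simp add: mult.assoc)
    finally show ?thesis by (simp only: F3_triple)
  qed
  moreover have "tinner n y z \<noteq> 0"
    using wy y(2) unfolding z_def by (simp add: tinner_linear tinner_commute[of n y w])
  moreover have "tinner n z y' \<noteq> 0"
    using wy' yy' unfolding z_def by (simp add: tinner_linear)
  moreover have "tinner n x z = 0" if "tinner n x a = 0" "tinner n x b = 0" "tinner n x y = 0" for x
    using that unfolding z_def w_def by (simp add: tinner_linear)
  ultimately show ?thesis using that by blast
qed

lemma codes_through_diag_eq:
  assumes x: "x \<in> tvecs n" "x \<noteq> (\<lambda>i. 0)" "tinner n x x = 0"
    and y: "y \<in> tvecs n" "y \<noteq> (\<lambda>i. 0)" "tinner n y y = 0"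
  shows "codes_through n x x = codes_through n y y"
proof (cases "tinner n x y = 0")
  case True
  obtain a where a: "a \<in> tvecs n" "tinner n a x \<noteq> 0" using exists_tinner_nonzero[OF x(1,2)] .
  obtain b where b: "b \<in> tvecs n" "tinner n b y \<noteq> 0" using exists_tinner_nonzero[OF y(1,2)] .
  obtain z where z: "z \<in> tvecs n" "tinner n z z = 0" "tinner n x z \<noteq> 0" "tinner n z y \<noteq> 0"
    using exists_isotropic_link[OF a(1) b(1) x(1,3) True a(2) b(2)] by blast
  show ?thesis
    using codes_through_diag_eq_of_tinner[OF x(1) z(1) x(3) z(2,3)]
      codes_through_diag_eq_of_tinner[OF z(1) y(1) z(2) y(3) z(4)] by simp
next
  case False
  show ?thesis by (rule codes_through_diag_eq_of_tinner[OF x(1) y(1) x(3) y(3) False])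
qed

definition isotropic_partners :: "nat \<Rightarrow> (nat \<Rightarrow> 3) \<Rightarrow> (nat \<Rightarrow> 3) set" where
  "isotropic_partners n x = {y \<in> tvecs n. tinner n x y = 0 \<and> tinner n y y = 0} - multiples x"

lemma isotropic_partnersD:
  assumes "y \<in> isotropic_partners n x"
  shows "y \<in> tvecs n" "tinner n x y = 0" "tinner n y y = 0" "y \<notin> multiples x"
  using assms unfolding isotropic_partners_def by auto

lemma codes_through_partner_eq:
  assumes x: "x \<in> tvecs n" "x \<noteq> (\<lambda>i. 0)"
    and y: "y \<in> isotropic_partners n x" and y': "y' \<in> isotropic_partners n x"
  shows "codes_through n x y = codes_through n x y'"
proof -
  note y = isotropic_partnersD[OF y] and y' = isotropic_partnersD[OF y']
  show ?thesis
  proof (cases "tinner n y y' = 0")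
    case True
    obtain a where a: "a \<in> tvecs n" "tinner n a x = 0" "tinner n a y \<noteq> 0"
      using exists_tinner_nonzero_perp[OF x y(1,4)] .
    obtain b where b: "b \<in> tvecs n" "tinner n b x = 0" "tinner n b y' \<noteq> 0"
      using exists_tinner_nonzero_perp[OF x y'(1,4)] .
    obtain z where z: "z \<in> tvecs n" "tinner n z z = 0" "tinner n y z \<noteq> 0" "tinner n z y' \<noteq> 0"
      and z_perp: "\<And>v. tinner n v a = 0 \<Longrightarrow> tinner n v b = 0 \<Longrightarrow> tinner n v y = 0 \<Longrightarrow> tinner n v z = 0"
      using exists_isotropic_link[OF a(1) b(1) y(1,3) True a(3) b(3)] by blast
    have xz: "tinner n x z = 0"
      by (rule z_perp) (simp_all add: tinner_commute[of n x a] tinner_commute[of n x b] a(2) b(2) y(2))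
    show ?thesis
      using codes_through_eq_of_tinner[OF y(1) z(1) y(3) z(2,3) y(2) xz]
        codes_through_eq_of_tinner[OF z(1) y'(1) z(2) y'(3) z(4) xz y'(2)] by simp
  next
    case False
    show ?thesis by (rule codes_through_eq_of_tinner[OF y(1) y'(1) y(3) y'(3) False y(2) y'(2)])
  qed
qed

section \<open>Counting isotropic vectors\<close>

lemma card_partition_F3:
  assumes "finite S"
  shows "card S = card {x \<in> S. f x = (0::3)} + card {x \<in> S. f x = 1} + card {x \<in> S. f x = 2}"
proof -
  have "card S = (\<Sum>x\<in>S. 1)" by simp
  also have "\<dots> = (\<Sum>b\<in>UNIV. \<Sum>x\<in>{x \<in> S. f x = b}. 1)"
    by (rule sum.group[symmetric]) (simp_all add: assms)
  finally show ?thesis by (simp add: sum_UNIV_F3)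
qed

lemma card_translate:
  assumes d: "d \<in> tvecs n" and PQ: "\<And>y. y \<in> tvecs n \<Longrightarrow> Q (\<lambda>i. y i + d i) \<longleftrightarrow> P y"
  shows "card {y \<in> tvecs n. P y} = card {y \<in> tvecs n. Q y}"
proof (rule bij_betw_same_card, rule bij_betw_byWitness[where f' = "\<lambda>y i. y i - d i"])
  show "(\<lambda>y i. y i - d i) ` {y \<in> tvecs n. Q y} \<subseteq> {y \<in> tvecs n. P y}"
  proof clarify
    fix y assume y: "y \<in> tvecs n" "Q y"
    have "(\<lambda>i. y i - d i) \<in> tvecs n" using y d by blast
    moreover have "Q (\<lambda>i. (y i - d i) + d i)" using y by simp
    ultimately show "(\<lambda>i. y i - d i) \<in> tvecs n \<and> P (\<lambda>i. y i - d i)" using PQ by blast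
  qed
next
  show "(\<lambda>y i. y i + d i) ` {y \<in> tvecs n. P y} \<subseteq> {y \<in> tvecs n. Q y}"
    using d PQ by blast
qed simp_all

definition quad_count :: "nat \<Rightarrow> 3 \<Rightarrow> nat" where
  "quad_count n c = card {v \<in> tvecs n. tinner n v v = c}"

lemma quad_count_Suc: "quad_count (Suc n) c = quad_count n c + 2 * quad_count n (c - 1)"
proof -
  define B where "B s = {w \<in> tvecs n. tinner n w w = c - s * s}" for s :: 3
  have Q: "tinner (Suc n) (w(n := s)) (w(n := s)) = tinner n w w + s * s" for w s
  proof -
    have "tinner n (w(n := s)) (w(n := s)) = tinner n w w"
      unfolding tinner_def by (rule sum.cong) auto
    then show ?thesis by (simp add: tinner_Suc)
  qed
  have "{v \<in> tvecs (Suc n). tinner (Suc n) v v = c} = (\<lambda>(s, w). w(n := s)) ` (SIGMA s:UNIV. B s)"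
  proof (intro equalityI subsetI)
    fix v assume v: "v \<in> {v \<in> tvecs (Suc n). tinner (Suc n) v v = c}"
    have "tinner n (v(n := 0)) (v(n := 0)) + v n * v n = c"
      using v Q[of "v(n := 0)" "v n"] by simp
    then have "v(n := 0) \<in> B (v n)"
      using v unfolding B_def tvecs_Suc_iff by (simp add: eq_diff_eq)
    then show "v \<in> (\<lambda>(s, w). w(n := s)) ` (SIGMA s:UNIV. B s)"
      by (intro rev_image_eqI[of "(v n, v(n := 0))"]) auto
  next
    fix v assume "v \<in> (\<lambda>(s, w). w(n := s)) ` (SIGMA s:UNIV. B s)"
    then obtain s w where v: "v = w(n := s)" and w: "w \<in> tvecs n" "tinner n w w = c - s * s"
      unfolding B_def by auto
    have "v \<in> tvecs (Suc n)" using w(1) unfolding v tvecs_def by simp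
    moreover have "tinner (Suc n) v v = c" unfolding v Q w(2) by simp
    ultimately show "v \<in> {v \<in> tvecs (Suc n). tinner (Suc n) v v = c}" by simp
  qed
  moreover have "inj_on (\<lambda>(s, w). w(n := s)) (SIGMA s:UNIV. B s)"
    using inj_on_tvecs_extend[of n] unfolding inj_on_def B_def by auto
  ultimately have "quad_count (Suc n) c = card (SIGMA s:UNIV. B s)"
    unfolding quad_count_def by (simp add: card_image)
  also have "\<dots> = (\<Sum>s\<in>UNIV. card (B s))"
    by (rule card_SigmaI) (auto simp: B_def finite_tvecs)
  also have "\<dots> = quad_count n c + 2 * quad_count n (c - 1)"
  proof -
    have four: "(4::3) = 1" by simp
    show ?thesis unfolding sum_UNIV_F3 B_def quad_count_def by (simp add: four)
  qed
  finally show ?thesis .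
qed

lemma quad_count_sum: "quad_count n 0 + quad_count n 1 + quad_count n 2 = 3 ^ n"
  using card_partition_F3[OF finite_tvecs, of n "\<lambda>v. tinner n v v"] card_tvecs[of n]
  unfolding quad_count_def by simp

lemma quad_count_Suc_Suc: "quad_count (Suc (Suc n)) 0 + 3 * quad_count n 0 = 4 * 3 ^ n"
proof -
  have minus_one: "(- 1 :: 3) = 2" by simp
  show ?thesis
    using quad_count_Suc[of "Suc n" 0] quad_count_Suc[of n 0] quad_count_Suc[of n 2] quad_count_sum[of n]
    by (simp add: minus_one)
qed

lemma quad_count_multiple_of_4: "3 * quad_count (4 * k) 0 = 3 ^ (4 * k) + 2 * 3 ^ (2 * k)"
proof (induction k)
  case 0
  then show ?case unfolding quad_count_def by (simp add: tvecs_0 tinner_def)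
next
  case (Suc k)
  have a2: "quad_count (Suc (Suc (4 * k))) 0 + 3 * quad_count (4 * k) 0 = 4 * 3 ^ (4 * k)"
    by (rule quad_count_Suc_Suc)
  have "quad_count (Suc (Suc (Suc (Suc (4 * k))))) 0 + 3 * quad_count (Suc (Suc (4 * k))) 0
      = 4 * 3 ^ Suc (Suc (4 * k))"
    by (rule quad_count_Suc_Suc)
  then have a4: "quad_count (Suc (Suc (Suc (Suc (4 * k))))) 0 + 3 * quad_count (Suc (Suc (4 * k))) 0
      = 36 * 3 ^ (4 * k)"
    by simp
  have e: "4 * Suc k = Suc (Suc (Suc (Suc (4 * k))))"
    and p: "3 ^ Suc (Suc (Suc (Suc (4 * k)))) = 81 * (3::nat) ^ (4 * k)"
    and q: "3 ^ (2 * Suc k) = 9 * (3::nat) ^ (2 * k)"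
    by simp_all
  show ?case unfolding e p q using a2 a4 Suc.IH by linarith
qed

lemma card_tinner_level:
  assumes x: "x \<in> tvecs n" "x \<noteq> (\<lambda>i. 0)"
  shows "3 * card {y \<in> tvecs n. tinner n x y = b} = 3 ^ n"
proof -
  obtain a where a: "a \<in> tvecs n" "tinner n a x \<noteq> 0" using exists_tinner_nonzero[OF x] .
  define w where "w = (\<lambda>i. tinner n a x * a i)"
  have w: "w \<in> tvecs n" "tinner n x w = 1"
    using a F3_mult_self[OF a(2)] unfolding w_def by (auto simp: tinner_scale_right tinner_commute[of n x])
  have level: "card {y \<in> tvecs n. tinner n x y = 0} = card {y \<in> tvecs n. tinner n x y = c}" for c
  proof (rule card_translate[where d = "\<lambda>i. c * w i"])
    show "(\<lambda>i. c * w i) \<in> tvecs n" using w(1) by blast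
  qed (simp add: tinner_linear w(2))
  show ?thesis
    using card_partition_F3[OF finite_tvecs, of n "tinner n x"] card_tvecs[of n]
      level[of 1] level[of 2] level[of b] by simp
qed

text \<open>Adding \<open>2cb\<cdot>x\<close> to \<open>y\<close> keeps \<open>x\<cdot>y = b\<close> and adds \<open>4cb\<^sup>2 = c\<close> to \<open>y\<cdot>y\<close>.\<close>

lemma card_tinner_level_isotropic:
  assumes x: "x \<in> tvecs n" "tinner n x x = 0" and b: "b \<noteq> 0"
  shows "card {y \<in> tvecs n. tinner n x y = b}
    = 3 * card {y \<in> tvecs n. tinner n x y = b \<and> tinner n y y = 0}"
proof -
  have level: "card {y \<in> tvecs n. tinner n x y = b \<and> tinner n y y = 0}
      = card {y \<in> tvecs n. tinner n x y = b \<and> tinner n y y = c}" for c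
  proof (rule card_translate[where d = "\<lambda>i. (2 * c * b) * x i"])
    show "(\<lambda>i. (2 * c * b) * x i) \<in> tvecs n" using x(1) by blast
    fix y
    let ?y = "\<lambda>i. y i + (2 * c * b) * x i"
    have "tinner n x ?y = tinner n x y" using x(2) by (simp add: tinner_linear)
    moreover have "tinner n ?y ?y = tinner n y y + (2 * c * b) * tinner n x y + (2 * c * b) * tinner n x y"
      unfolding tinner_add_scale_add_scale using x(2) by (simp add: tinner_commute[of n x y])
    moreover have "(2 * c * b) * b + (2 * c * b) * b = c"
    proof -
      have "(2 * c * b) * b + (2 * c * b) * b = 4 * c * (b * b)" by (simp add: algebra_simps)
      also have "(4::3) = 1" by simp
      finally show ?thesis using F3_mult_self[OF b] by simp
    qed
    ultimately show "(tinner n x ?y = b \<and> tinner n ?y ?y = c) \<longleftrightarrow> (tinner n x y = b \<and> tinner n y y = 0)"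
      by (cases "tinner n x y = b") (simp_all add: add.assoc)
  qed
  have "card {y \<in> tvecs n. tinner n x y = b} = card {y \<in> tvecs n. tinner n x y = b \<and> tinner n y y = 0}
      + card {y \<in> tvecs n. tinner n x y = b \<and> tinner n y y = 1}
      + card {y \<in> tvecs n. tinner n x y = b \<and> tinner n y y = 2}"
    using card_partition_F3[of "{y \<in> tvecs n. tinner n x y = b}" "\<lambda>y. tinner n y y"] finite_tvecs[of n]
    by (simp add: conj_assoc)
  then show ?thesis using level[of 1] level[of 2] by simp
qed

lemma card_isotropic_perp:
  assumes x: "x \<in> tvecs n" "x \<noteq> (\<lambda>i. 0)" "tinner n x x = 0"
  shows "9 * card {y \<in> tvecs n. tinner n x y = 0 \<and> tinner n y y = 0} + 2 * 3 ^ n = 9 * quad_count n 0"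
proof -
  let ?I = "\<lambda>b. card {y \<in> tvecs n. tinner n x y = b \<and> tinner n y y = 0}"
  have "{z \<in> {y \<in> tvecs n. tinner n y y = 0}. tinner n x z = b}
      = {y \<in> tvecs n. tinner n x y = b \<and> tinner n y y = 0}" for b
    by auto
  then have "quad_count n 0 = ?I 0 + ?I 1 + ?I 2"
    using card_partition_F3[of "{y \<in> tvecs n. tinner n y y = 0}" "tinner n x"] finite_tvecs[of n]
    unfolding quad_count_def by simp
  moreover have "9 * ?I b = 3 ^ n" if "b \<noteq> 0" for b
    using card_tinner_level[OF x(1,2), of b] card_tinner_level_isotropic[OF x(1,3) that] by simp
  ultimately show ?thesis by simp
qed

lemma card_isotropic_partners:
  assumes x: "x \<in> tvecs n" "x \<noteq> (\<lambda>i. 0)" "tinner n x x = 0"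
  shows "9 * card (isotropic_partners n x) + 27 + 2 * 3 ^ n = 9 * quad_count n 0"
proof -
  let ?P = "{y \<in> tvecs n. tinner n x y = 0 \<and> tinner n y y = 0}"
  have sub: "multiples x \<subseteq> ?P"
    unfolding multiples_def using x(1,3) by (auto simp: tinner_linear)
  have fin: "finite ?P" using finite_tvecs by simp
  have "card (isotropic_partners n x) = card ?P - card (multiples x)"
    unfolding isotropic_partners_def using card_Diff_subset[OF finite_subset[OF sub fin] sub] .
  moreover have "card (multiples x) \<le> card ?P" using card_mono[OF fin sub] .
  ultimately have "card (isotropic_partners n x) + 3 = card ?P"
    using card_multiples[OF x(2)] by simp
  then show ?thesis using card_isotropic_perp[OF x] by simp
qed

section \<open>Double counting\<close>

lemma card_filter_eq_sum: "finite A \<Longrightarrow> card {a \<in> A. P a} = (\<Sum>a\<in>A. if P a then 1 else 0)"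
  by (simp add: sum.inter_filter[symmetric])

lemma sum_card_filter_swap:
  assumes "finite A" "finite X"
  shows "(\<Sum>D\<in>A. card {x \<in> X. P x D}) = (\<Sum>x\<in>X. card {D \<in> A. P x D})"
  using assms by (simp add: card_filter_eq_sum sum.swap[of _ A X])

lemma sum_card_inter_III:
  assumes "C \<subseteq> tvecs n"
  shows "(\<Sum>D\<in>III n. card (C \<inter> D)) = (\<Sum>x\<in>C. codes_through n x x)"
proof -
  have "finite C" using assms finite_tvecs finite_subset by blast
  have "(\<Sum>D\<in>III n. card (C \<inter> D)) = (\<Sum>D\<in>III n. card {x \<in> C. x \<in> D})"
    by (simp add: Int_def)
  also have "\<dots> = (\<Sum>x\<in>C. card {D \<in> III n. x \<in> D})"
    by (rule sum_card_filter_swap[OF finite_III \<open>finite C\<close>])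
  finally show ?thesis unfolding codes_through_def by simp
qed

lemma sum_card_inter_sq_III:
  assumes "C \<subseteq> tvecs n"
  shows "(\<Sum>D\<in>III n. card (C \<inter> D) ^ 2) = (\<Sum>x\<in>C. \<Sum>y\<in>C. codes_through n x y)"
proof -
  have "finite (C \<times> C)" using assms finite_tvecs finite_subset by blast
  have "card (C \<inter> D) ^ 2 = card {p \<in> C \<times> C. fst p \<in> D \<and> snd p \<in> D}" for D
  proof -
    have "{p \<in> C \<times> C. fst p \<in> D \<and> snd p \<in> D} = (C \<inter> D) \<times> (C \<inter> D)" by auto
    then show ?thesis by (simp add: card_cartesian_product power2_eq_square)
  qed
  then have "(\<Sum>D\<in>III n. card (C \<inter> D) ^ 2)
      = (\<Sum>D\<in>III n. card {p \<in> C \<times> C. fst p \<in> D \<and> snd p \<in> D})"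
    by simp
  also have "\<dots> = (\<Sum>p\<in>C \<times> C. card {D \<in> III n. fst p \<in> D \<and> snd p \<in> D})"
    by (rule sum_card_filter_swap[OF finite_III \<open>finite (C \<times> C)\<close>])
  finally show ?thesis unfolding codes_through_def by (simp add: sum.cartesian_product split_def)
qed

lemma codes_through_zero_left: "codes_through n (\<lambda>i. 0) y = codes_through n y y"
proof -
  have "{D \<in> III n. (\<lambda>i. 0) \<in> D \<and> y \<in> D} = {D \<in> III n. y \<in> D \<and> y \<in> D}"
    using III_linear_code linear_code_zero by blast
  then show ?thesis unfolding codes_through_def by simp
qed

lemma codes_through_zero_zero: "codes_through n (\<lambda>i. 0) (\<lambda>i. 0) = card (III n)"
proof -
  have "{D \<in> III n. (\<lambda>i. 0) \<in> D \<and> (\<lambda>i. 0) \<in> D} = III n"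
    using III_linear_code linear_code_zero by blast
  then show ?thesis unfolding codes_through_def by simp
qed

lemma codes_through_multiple:
  assumes "y \<in> multiples x"
  shows "codes_through n x y = codes_through n x x"
proof -
  obtain c where y: "y = (\<lambda>i. c * x i)" using assms unfolding multiples_def by blast
  have "x \<in> D \<and> y \<in> D \<longleftrightarrow> x \<in> D" if "D \<in> III n" for D
  proof (cases "c = 0")
    case True
    then show ?thesis unfolding y using linear_code_zero[OF III_linear_code[OF that]] by simp
  next
    case False
    then show ?thesis unfolding y using scale_mem_linear_code_iff[OF III_linear_code[OF that]] by simp
  qed
  then have "{D \<in> III n. x \<in> D \<and> y \<in> D} = {D \<in> III n. x \<in> D \<and> x \<in> D}" by blast
  then show ?thesis unfolding codes_through_def by simp
qed

lemma III_diff_multiples: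
  assumes D: "D \<in> III n" and x: "x \<in> D"
  shows "D - multiples x = {z \<in> isotropic_partners n x. z \<in> D}"
  unfolding isotropic_partners_def
  using linear_code_subset[OF III_linear_code[OF D]] III_orthogonal[OF D] x by auto

lemma card_III_diff_multiples:
  assumes D: "D \<in> III n" and n: "n = 2 * m" and x: "x \<in> D" "x \<noteq> (\<lambda>i. 0)"
  shows "card (D - multiples x) = 3 ^ m - 3"
proof -
  note L = III_linear_code[OF D]
  have "multiples x \<subseteq> D" by (rule multiples_subset[OF L x(1)])
  then show ?thesis
    using card_Diff_subset[OF finite_subset[OF _ finite_linear_code[OF L]]]
      card_multiples[OF x(2)] card_III[OF D n] by simp
qed

lemma card_III_mult_codes_through:
  assumes x: "x \<in> tvecs n" "x \<noteq> (\<lambda>i. 0)" "tinner n x x = 0" and n: "n = 2 * m"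
  shows "card (III n) * (3 ^ m - 1) = (quad_count n 0 - 1) * codes_through n x x"
proof -
  define I where "I = {y \<in> tvecs n. tinner n y y = 0} - {\<lambda>i. 0}"
  have "finite I" unfolding I_def using finite_tvecs by simp
  have count_D: "card {y \<in> I. y \<in> D} = 3 ^ m - 1" if D: "D \<in> III n" for D
  proof -
    have "{y \<in> I. y \<in> D} = D - {\<lambda>i. 0}"
      unfolding I_def using linear_code_subset[OF III_linear_code[OF D]] III_orthogonal[OF D] by auto
    then show ?thesis
      using linear_code_zero[OF III_linear_code[OF D]] card_III[OF D n]
        finite_linear_code[OF III_linear_code[OF D]] by simp
  qed
  have count_y: "card {D \<in> III n. y \<in> D} = codes_through n x x" if "y \<in> I" for y
    using codes_through_diag_eq[OF x, of y] that unfolding I_def codes_through_def by auto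
  have "card (III n) * (3 ^ m - 1) = (\<Sum>D\<in>III n. card {y \<in> I. y \<in> D})"
    using count_D by simp
  also have "\<dots> = (\<Sum>y\<in>I. card {D \<in> III n. y \<in> D})"
    by (rule sum_card_filter_swap[OF finite_III \<open>finite I\<close>])
  also have "\<dots> = card I * codes_through n x x"
    using count_y by simp
  also have "card I = quad_count n 0 - 1"
    unfolding I_def quad_count_def by (simp add: card_Diff_singleton finite_tvecs)
  finally show ?thesis .
qed

lemma codes_through_mult_partners:
  assumes x: "x \<in> tvecs n" "x \<noteq> (\<lambda>i. 0)" "tinner n x x = 0" and n: "n = 2 * m"
    and y: "y \<in> isotropic_partners n x"
  shows "codes_through n x x * (3 ^ m - 3) = card (isotropic_partners n x) * codes_through n x y"
proof -
  define A where "A = {D \<in> III n. x \<in> D}"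
  have "finite A" unfolding A_def using finite_III by simp
  have "finite (isotropic_partners n x)" unfolding isotropic_partners_def using finite_tvecs by simp
  have count_D: "card {z \<in> isotropic_partners n x. z \<in> D} = 3 ^ m - 3" if "D \<in> A" for D
    using III_diff_multiples card_III_diff_multiples[OF _ n _ x(2)] that unfolding A_def by auto
  have count_z: "card {D \<in> A. z \<in> D} = codes_through n x y" if "z \<in> isotropic_partners n x" for z
    using codes_through_partner_eq[OF x(1,2) that y] unfolding A_def codes_through_def
    by (simp add: conj_assoc)
  have "card A = codes_through n x x" unfolding A_def codes_through_def by simp
  then have "codes_through n x x * (3 ^ m - 3) = (\<Sum>D\<in>A. card {z \<in> isotropic_partners n x. z \<in> D})"
    using count_D by simp
  also have "\<dots> = (\<Sum>z\<in>isotropic_partners n x. card {D \<in> A. z \<in> D})"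
    by (rule sum_card_filter_swap[OF \<open>finite A\<close> \<open>finite (isotropic_partners n x)\<close>])
  also have "\<dots> = card (isotropic_partners n x) * codes_through n x y"
    using count_z by simp
  finally show ?thesis .
qed

lemma tvecs_nonzero_length_pos:
  assumes "x \<in> tvecs n" "x \<noteq> (\<lambda>i. 0)"
  shows "0 < n"
proof -
  obtain i where "i < n" using tvecs_nonzero_coord[OF assms] .
  then show ?thesis by simp
qed

lemma nine_le_three_power: "0 < k \<Longrightarrow> (9::real) \<le> 3 ^ (2 * k)"
proof -
  assume "0 < k"
  then have "(3::nat) ^ 2 \<le> 3 ^ (2 * k)" by (intro power_increasing) auto
  then have "real (3 ^ 2) \<le> real (3 ^ (2 * k))" by (rule of_nat_mono)
  then show ?thesis by simp
qed

lemma three_le_three_power: "0 < k \<Longrightarrow> (3::nat) \<le> 3 ^ (2 * k)"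
  using power_increasing[of 1 "2 * k" "3::nat"] by simp

lemma three_power_4k: "(3::real) ^ (4 * k) = (3 ^ (2 * k)) ^ 2"
  by (simp add: power_mult[symmetric] mult.commute)

lemma quad_count_multiple_of_4_real:
  "3 * real (quad_count (4 * k) 0) = (3 ^ (2 * k)) ^ 2 + 2 * 3 ^ (2 * k)"
  using arg_cong[OF quad_count_multiple_of_4[of k], of real] by (simp add: three_power_4k)

lemma codes_through_diag_value:
  assumes n: "n = 4 * k" and x: "x \<in> tvecs n" "x \<noteq> (\<lambda>i. 0)" "tinner n x x = 0"
  shows "real (codes_through n x x) = 3 * real (card (III n)) / (3 ^ (2 * k) + 3)"
proof -
  define q :: real where "q = 3 ^ (2 * k)"
  have "0 < k" using tvecs_nonzero_length_pos[OF x(1,2)] n by simp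
  then have q: "9 \<le> q" unfolding q_def by (rule nine_le_three_power)
  have quad: "3 * real (quad_count n 0) = q ^ 2 + 2 * q"
    unfolding q_def n by (rule quad_count_multiple_of_4_real)
  have "0 < q" using q by simp
  then have "0 < q ^ 2 + 2 * q" by (intro add_pos_pos) simp_all
  then have Q: "1 \<le> quad_count n 0" using quad by simp
  have "card (III n) * (3 ^ (2 * k) - 1) = (quad_count n 0 - 1) * codes_through n x x"
    using card_III_mult_codes_through[OF x] n by simp
  from arg_cong[OF this, of real]
  have "real (card (III n)) * (q - 1) = (real (quad_count n 0) - 1) * real (codes_through n x x)"
    unfolding q_def using Q by (simp add: of_nat_diff)
  then have "3 * real (card (III n)) * (q - 1) = 3 * ((real (quad_count n 0) - 1) * real (codes_through n x x))"
    by (simp add: mult.assoc)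
  also have "\<dots> = (3 * real (quad_count n 0) - 3) * real (codes_through n x x)"
    by (simp add: algebra_simps)
  also have "\<dots> = (q + 3) * (q - 1) * real (codes_through n x x)"
    unfolding quad by (simp add: algebra_simps power2_eq_square)
  finally have "(3 * real (card (III n))) * (q - 1) = ((q + 3) * real (codes_through n x x)) * (q - 1)"
    by (simp only: ac_simps)
  then have "3 * real (card (III n)) = (q + 3) * real (codes_through n x x)"
    using q by simp
  then show ?thesis using q unfolding q_def[symmetric] by (simp add: eq_divide_eq mult.commute)
qed

lemma codes_through_partner_value:
  assumes n: "n = 4 * k" and x: "x \<in> tvecs n" "x \<noteq> (\<lambda>i. 0)" "tinner n x x = 0"
    and y: "y \<in> isotropic_partners n x"
  shows "real (codes_through n x y) = 9 * real (codes_through n x x) / (3 ^ (2 * k) + 9)"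
proof -
  define q :: real where "q = 3 ^ (2 * k)"
  have "0 < k" using tvecs_nonzero_length_pos[OF x(1,2)] n by simp
  then have q: "9 \<le> q" unfolding q_def by (rule nine_le_three_power)
  have "3 * real (quad_count n 0) = q ^ 2 + 2 * q"
    unfolding q_def n by (rule quad_count_multiple_of_4_real)
  moreover have "9 * real (card (isotropic_partners n x)) + 27 + 2 * q ^ 2 = 9 * real (quad_count n 0)"
    using arg_cong[OF card_isotropic_partners[OF x], of real] unfolding q_def n
    by (simp add: three_power_4k)
  ultimately have Y: "9 * real (card (isotropic_partners n x)) = (q + 9) * (q - 3)"
    by (simp add: algebra_simps power2_eq_square)
  have "codes_through n x x * (3 ^ (2 * k) - 3) = card (isotropic_partners n x) * codes_through n x y"
    using codes_through_mult_partners[OF x _ y] n by simp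
  from arg_cong[OF this, of real]
  have "real (codes_through n x x) * (q - 3) = real (card (isotropic_partners n x)) * real (codes_through n x y)"
    unfolding q_def using three_le_three_power[OF \<open>0 < k\<close>] by (simp add: of_nat_diff)
  then have "9 * (real (codes_through n x x) * (q - 3))
      = (9 * real (card (isotropic_partners n x))) * real (codes_through n x y)"
    by (simp add: mult.assoc)
  then have "(9 * real (codes_through n x x)) * (q - 3) = ((q + 9) * real (codes_through n x y)) * (q - 3)"
    unfolding Y by (simp only: ac_simps)
  then have "9 * real (codes_through n x x) = (q + 9) * real (codes_through n x y)"
    using q by simp
  then show ?thesis using q unfolding q_def[symmetric] by (simp add: eq_divide_eq mult.commute)
qed

lemma sum_codes_through_diag:
  assumes C: "C \<in> III n" and n: "n = 4 * k"
  shows "(\<Sum>x\<in>C. real (codes_through n x x))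
    = real (card (III n)) * (4 * 3 ^ (2 * k) / (3 ^ (2 * k) + 3))"
proof -
  define q :: real where "q = 3 ^ (2 * k)"
  note L = III_linear_code[OF C]
  have "(\<Sum>x\<in>C. real (codes_through n x x))
      = real (codes_through n (\<lambda>i. 0) (\<lambda>i. 0)) + (\<Sum>x\<in>C - {\<lambda>i. 0}. real (codes_through n x x))"
    by (rule sum.remove[OF finite_linear_code[OF L] linear_code_zero[OF L]])
  also have "(\<Sum>x\<in>C - {\<lambda>i. 0}. real (codes_through n x x))
      = (\<Sum>x\<in>C - {\<lambda>i. 0}. 3 * real (card (III n)) / (q + 3))"
  proof (rule sum.cong)
    fix x assume "x \<in> C - {\<lambda>i. 0}"
    then show "real (codes_through n x x) = 3 * real (card (III n)) / (q + 3)"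
      using codes_through_diag_value[OF n] linear_code_subset[OF L] III_orthogonal[OF C]
      unfolding q_def by auto
  qed simp
  also have "\<dots> = (q - 1) * (3 * real (card (III n)) / (q + 3))"
    using card_III[OF C, of "2 * k"] n linear_code_zero[OF L] finite_linear_code[OF L]
    unfolding q_def by (simp add: of_nat_diff)
  also have "real (codes_through n (\<lambda>i. 0) (\<lambda>i. 0)) + (q - 1) * (3 * real (card (III n)) / (q + 3))
      = real (card (III n)) * (4 * q / (q + 3))"
  proof -
    have "0 < q" unfolding q_def by simp
    then show ?thesis unfolding codes_through_zero_zero by (simp add: field_simps)
  qed
  finally show ?thesis unfolding q_def .
qed

lemma sum_codes_through_row:
  assumes C: "C \<in> III n" and n: "n = 4 * k" and x: "x \<in> C" "x \<noteq> (\<lambda>i. 0)"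
  shows "(\<Sum>y\<in>C. real (codes_through n x y))
    = real (card (III n)) * (36 * 3 ^ (2 * k) / ((3 ^ (2 * k) + 3) * (3 ^ (2 * k) + 9)))"
proof -
  define q :: real where "q = 3 ^ (2 * k)"
  define f where "f = real (codes_through n x x)"
  note L = III_linear_code[OF C]
  have x': "x \<in> tvecs n" "tinner n x x = 0"
    using x(1) linear_code_subset[OF L] III_orthogonal[OF C] by auto
  have "0 < k" using tvecs_nonzero_length_pos[OF x'(1) x(2)] n by simp
  have "(\<Sum>y\<in>C. real (codes_through n x y))
      = (\<Sum>y\<in>C - multiples x. real (codes_through n x y)) + (\<Sum>y\<in>multiples x. real (codes_through n x y))"
    by (rule sum.subset_diff[OF multiples_subset[OF L x(1)] finite_linear_code[OF L]])
  also have "(\<Sum>y\<in>multiples x. real (codes_through n x y)) = 3 * f"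
    unfolding f_def using codes_through_multiple card_multiples[OF x(2)] by simp
  also have "(\<Sum>y\<in>C - multiples x. real (codes_through n x y)) = (\<Sum>y\<in>C - multiples x. 9 * f / (q + 9))"
  proof (rule sum.cong)
    fix y assume "y \<in> C - multiples x"
    then have "y \<in> isotropic_partners n x" unfolding III_diff_multiples[OF C x(1)] by simp
    then show "real (codes_through n x y) = 9 * f / (q + 9)"
      using codes_through_partner_value[OF n x'(1) x(2) x'(2)] unfolding f_def q_def by simp
  qed simp
  also have "\<dots> = (q - 3) * (9 * f / (q + 9))"
    using card_III_diff_multiples[OF C _ x, of "2 * k"] n three_le_three_power[OF \<open>0 < k\<close>]
    unfolding q_def by (simp add: of_nat_diff)
  also have "f = 3 * real (card (III n)) / (q + 3)"
    unfolding f_def q_def by (rule codes_through_diag_value[OF n x'(1) x(2) x'(2)])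
  also have "(q - 3) * (9 * (3 * real (card (III n)) / (q + 3)) / (q + 9))
      + 3 * (3 * real (card (III n)) / (q + 3))
      = real (card (III n)) * (36 * q / ((q + 3) * (q + 9)))"
  proof -
    have "0 < q" unfolding q_def by simp
    then show ?thesis by (simp add: divide_simps) (simp add: algebra_simps)
  qed
  finally show ?thesis unfolding q_def .
qed

lemma sum_sum_codes_through:
  assumes C: "C \<in> III n" and n: "n = 4 * k"
  shows "(\<Sum>x\<in>C. \<Sum>y\<in>C. real (codes_through n x y))
    = real (card (III n)) * (40 * (3 ^ (2 * k)) ^ 2 / ((3 ^ (2 * k) + 3) * (3 ^ (2 * k) + 9)))"
proof -
  define q :: real where "q = 3 ^ (2 * k)"
  define N where "N = real (card (III n))"
  note L = III_linear_code[OF C]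
  have "(\<Sum>x\<in>C. \<Sum>y\<in>C. real (codes_through n x y))
      = (\<Sum>y\<in>C. real (codes_through n (\<lambda>i. 0) y)) + (\<Sum>x\<in>C - {\<lambda>i. 0}. \<Sum>y\<in>C. real (codes_through n x y))"
    by (rule sum.remove[OF finite_linear_code[OF L] linear_code_zero[OF L]])
  also have "(\<Sum>y\<in>C. real (codes_through n (\<lambda>i. 0) y)) = N * (4 * q / (q + 3))"
    unfolding codes_through_zero_left N_def q_def by (rule sum_codes_through_diag[OF C n])
  also have "(\<Sum>x\<in>C - {\<lambda>i. 0}. \<Sum>y\<in>C. real (codes_through n x y))
      = (\<Sum>x\<in>C - {\<lambda>i. 0}. N * (36 * q / ((q + 3) * (q + 9))))"
    using sum_codes_through_row[OF C n] unfolding N_def q_def by simp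
  also have "\<dots> = (q - 1) * (N * (36 * q / ((q + 3) * (q + 9))))"
    using card_III[OF C, of "2 * k"] n linear_code_zero[OF L] finite_linear_code[OF L]
    unfolding q_def by (simp add: of_nat_diff)
  also have "N * (4 * q / (q + 3)) + (q - 1) * (N * (36 * q / ((q + 3) * (q + 9))))
      = N * (40 * q ^ 2 / ((q + 3) * (q + 9)))"
  proof -
    have "0 < q" unfolding q_def by simp
    then show ?thesis by (simp add: divide_simps) (simp add: algebra_simps power2_eq_square)
  qed
  finally show ?thesis unfolding N_def q_def .
qed

lemma sum_card_inter_III_eq:
  assumes C: "C \<in> III n" and n: "n = 4 * k"
  shows "(\<Sum>D\<in>III n. real (card (C \<inter> D)))
    = real (card (III n)) * (4 * 3 ^ (2 * k) / (3 ^ (2 * k) + 3))"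
  using arg_cong[OF sum_card_inter_III[OF linear_code_subset[OF III_linear_code[OF C]]], of real]
    sum_codes_through_diag[OF C n] by simp

lemma sum_card_inter_sq_III_eq:
  assumes C: "C \<in> III n" and n: "n = 4 * k"
  shows "(\<Sum>D\<in>III n. real (card (C \<inter> D)) ^ 2)
    = real (card (III n)) * (40 * (3 ^ (2 * k)) ^ 2 / ((3 ^ (2 * k) + 3) * (3 ^ (2 * k) + 9)))"
  using arg_cong[OF sum_card_inter_sq_III[OF linear_code_subset[OF III_linear_code[OF C]]], of real]
    sum_sum_codes_through[OF C n] by simp

lemma four_minus_powi_eq:
  assumes n: "n = 4 * k"
  shows "4 - 4 / ((3::real) powi (int (n div 2) - 1) + 1) = 4 * 3 ^ (2 * k) / (3 ^ (2 * k) + 3)"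
proof -
  define q :: real where "q = 3 ^ (2 * k)"
  have "0 < q" unfolding q_def by simp
  have "(3::real) powi (int (n div 2) - 1) = q / 3"
    unfolding q_def n using power_int_diff[of "3::real" "int (2 * k)" 1]
      power_int_of_nat[of "3::real" "2 * k"] by simp
  then show ?thesis using \<open>0 < q\<close> unfolding q_def[symmetric] by (simp add: field_simps)
qed

theorem theorem5p5:
  fixes n :: nat and C :: "(nat \<Rightarrow> 3) set"
  assumes "n mod 4 = 0" and "type_III n C"
  shows "((\<Sum>D\<in>III n. real (card (C \<inter> D))) / real (card (III n))
           = 4 - 4 / ((3::real) powi (int (n div 2) - 1) + 1))
         \<and> ((\<Sum>D\<in>III n. real (card (C \<inter> D)) ^ 2) / real (card (III n))
           = 40 * ((3::real) ^ (n div 2))^2 / (((3::real) ^ (n div 2) + 3) * ((3::real) ^ (n div 2) + 9)))"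
proof -
  obtain k where n: "n = 4 * k" using assms(1) by auto
  have C: "C \<in> III n" using assms(2) unfolding III_def by simp
  then have "card (III n) \<noteq> 0" using finite_III by auto
  moreover have "n div 2 = 2 * k" using n by simp
  ultimately show ?thesis
    unfolding sum_card_inter_III_eq[OF C n] sum_card_inter_sq_III_eq[OF C n] four_minus_powi_eq[OF n]
    by simp
qed

end
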